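(* If a signed graph $SG$ has a negative loop $e$, then $H^i_b(SG)\cong H^i_b(SG-e)$ for all $i$.
   Context: Signed graphs: $SG=(G,\sigma)$, $G$ finite (loops, multiple edges allowed), $\sigma:E(G)\to\{\pm1\}$; a negative loop is a loop with sign $-1$; $SG-e$ deletes $e$. Negative circuit: product of edge signs $-1$ (a loop is a circuit of one edge); balanced = no negative circuit. $[G:s]$, $[SG:s]$: spanning subgraph with edge set $s$. Balanced complex: Fix a total order on $E(G)$. An enhanced state of $G$ is $S=(s,c)$, $c$ labels each component of $[G:s]$ by $1$ or $x$; $j(S)$ = number of $x$-labels (grading). With $m(1,1)=1$, $m(1,x)=m(x,1)=x$, $m(x,x)=0$: for $e'\notin s$, $S_{e'}=(s\cup\{e'\},c_{e'})$ where a component containing both ends of $e'$ keeps its label and if $e'$ joins components $E_i,E_j$ the merged one gets $m(c(E_i),c(E_j))$ ($S_{e'}=0$ if both are $x$). $d(S)=\sum_{e'\notin s}(-1)^{n(e')}S_{e'}$, $n(e')$ = number of edges of $s$ preceding $e'$. $H^i_b(SG)$: cohomology of $C^\bullet_b(SG)$, free on enhanced states with $[SG:s]$ balanced, differential $d_b=f_b\circ d$, where $f_b$ sends an enhanced state to itself if $[SG:s]$ is balanced and to $0$ otherwise. *)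

theory Defs
  imports "HOL-Algebra.Coset"
begin

(* A signed graph SG = (G, sigma): finite vertex set V, finite edge set E
   (totally ordered via the linorder on 'e), endpoint map ends
   (a loop has fst (ends e) = snd (ends e); multiple edges allowed),
   and sign map sigma with values +1 / -1. *)

definition signed_graph :: "'v set \<Rightarrow> 'e set \<Rightarrow> ('e \<Rightarrow> 'v \<times> 'v) \<Rightarrow> ('e \<Rightarrow> int) \<Rightarrow> bool" where
  "signed_graph V E ends \<sigma> \<longleftrightarrow> finite V \<and> finite E \<and>
     (\<forall>e\<in>E. fst (ends e) \<in> V \<and> snd (ends e) \<in> V) \<and>
     (\<forall>e\<in>E. \<sigma> e = 1 \<or> \<sigma> e = -1)"

definition negative_loop :: "'e set \<Rightarrow> ('e \<Rightarrow> 'v \<times> 'v) \<Rightarrow> ('e \<Rightarrow> int) \<Rightarrow> 'e \<Rightarrow> bool" where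
  "negative_loop E ends \<sigma> e \<longleftrightarrow> e \<in> E \<and> fst (ends e) = snd (ends e) \<and> \<sigma> e = -1"

definition is_circuit :: "('e \<Rightarrow> 'v \<times> 'v) \<Rightarrow> 'e list \<Rightarrow> 'v list \<Rightarrow> bool" where
  "is_circuit ends C vs \<longleftrightarrow> length C \<ge> 1 \<and> length vs = length C \<and> distinct C \<and> distinct vs \<and>
     (\<forall>i < length C. ends (C ! i) = (vs ! i, vs ! ((i + 1) mod length C)) \<or>
                     ends (C ! i) = (vs ! ((i + 1) mod length C), vs ! i))"

definition balanced :: "('e \<Rightarrow> 'v \<times> 'v) \<Rightarrow> ('e \<Rightarrow> int) \<Rightarrow> 'e set \<Rightarrow> bool" where
  "balanced ends \<sigma> s \<longleftrightarrow>
     \<not> (\<exists>C vs. is_circuit ends C vs \<and> set C \<subseteq> s \<and> prod_list (map \<sigma> C) = -1)"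

definition adj :: "('e \<Rightarrow> 'v \<times> 'v) \<Rightarrow> 'e set \<Rightarrow> ('v \<times> 'v) set" where
  "adj ends s = {(u, w). \<exists>e\<in>s. ends e = (u, w) \<or> ends e = (w, u)}"

definition comp :: "('e \<Rightarrow> 'v \<times> 'v) \<Rightarrow> 'e set \<Rightarrow> 'v \<Rightarrow> 'v set" where
  "comp ends s v = (adj ends s)\<^sup>* `` {v}"

definition comps :: "'v set \<Rightarrow> ('e \<Rightarrow> 'v \<times> 'v) \<Rightarrow> 'e set \<Rightarrow> 'v set set" where
  "comps V ends s = comp ends s ` V"

(* An enhanced state (s, c) is represented as (s, X) where X is the set of
   components of [G:s] labelled x (the others are labelled 1). *)
type_synonym ('e, 'v) estate = "'e set \<times> 'v set set"

definition bal_states :: "'v set \<Rightarrow> 'e set \<Rightarrow> ('e \<Rightarrow> 'v \<times> 'v) \<Rightarrow> ('e \<Rightarrow> int) \<Rightarrow> int \<Rightarrow> ('e, 'v) estate set" where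
  "bal_states V E ends \<sigma> i = {(s, X). s \<subseteq> E \<and> int (card s) = i \<and> balanced ends \<sigma> s \<and> X \<subseteq> comps V ends s}"

(* S_{e'}: None encodes S_{e'} = 0 *)
definition edge_step :: "('e \<Rightarrow> 'v \<times> 'v) \<Rightarrow> ('e, 'v) estate \<Rightarrow> 'e \<Rightarrow> ('e, 'v) estate option" where
  "edge_step ends S e' =
     (let s = fst S; X = snd S; Cu = comp ends s (fst (ends e')); Cw = comp ends s (snd (ends e')) in
      if Cu = Cw then Some (insert e' s, X)
      else if Cu \<in> X \<and> Cw \<in> X then None
      else Some (insert e' s, (X - {Cu, Cw}) \<union> (if Cu \<in> X \<or> Cw \<in> X then {Cu \<union> Cw} else {})))"

(* coefficient of T in d_b(S) = f_b(d(S)) for a basis element S *)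
definition db_coeff :: "'e::linorder set \<Rightarrow> ('e \<Rightarrow> 'v \<times> 'v) \<Rightarrow> ('e \<Rightarrow> int) \<Rightarrow> ('e, 'v) estate \<Rightarrow> ('e, 'v) estate \<Rightarrow> int" where
  "db_coeff E ends \<sigma> S T =
     (\<Sum>e'\<in>E - fst S. if edge_step ends S e' = Some T \<and> balanced ends \<sigma> (fst T)
                      then (-1) ^ card {a \<in> fst S. a < e'} else 0)"

(* C^i_b(SG): free abelian group on bal_states, as finitely supported integer functions *)
definition cochain_group :: "'v set \<Rightarrow> 'e set \<Rightarrow> ('e \<Rightarrow> 'v \<times> 'v) \<Rightarrow> ('e \<Rightarrow> int) \<Rightarrow> int \<Rightarrow> (('e, 'v) estate \<Rightarrow> int) monoid" where
  "cochain_group V E ends \<sigma> i =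
     \<lparr>carrier = {f. \<forall>T. f T \<noteq> 0 \<longrightarrow> T \<in> bal_states V E ends \<sigma> i},
      monoid.mult = (\<lambda>f g T. f T + g T),
      one = (\<lambda>T. 0)\<rparr>"

definition bal_diff :: "'v set \<Rightarrow> 'e::linorder set \<Rightarrow> ('e \<Rightarrow> 'v \<times> 'v) \<Rightarrow> ('e \<Rightarrow> int) \<Rightarrow> int \<Rightarrow> (('e, 'v) estate \<Rightarrow> int) \<Rightarrow> (('e, 'v) estate \<Rightarrow> int)" where
  "bal_diff V E ends \<sigma> i f = (\<lambda>T. \<Sum>S\<in>bal_states V E ends \<sigma> i. f S * db_coeff E ends \<sigma> S T)"

definition bal_cohom :: "'v set \<Rightarrow> 'e::linorder set \<Rightarrow> ('e \<Rightarrow> 'v \<times> 'v) \<Rightarrow> ('e \<Rightarrow> int) \<Rightarrow> int \<Rightarrow> (('e, 'v) estate \<Rightarrow> int) set monoid" where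
  "bal_cohom V E ends \<sigma> i =
     ((cochain_group V E ends \<sigma> i)\<lparr>carrier :=
         kernel (cochain_group V E ends \<sigma> i) (cochain_group V E ends \<sigma> (i + 1)) (bal_diff V E ends \<sigma> i)\<rparr>)
     Mod (bal_diff V E ends \<sigma> (i - 1) ` carrier (cochain_group V E ends \<sigma> (i - 1)))"

end

theory Submission
  imports Defs
begin

text \<open>A negative loop is by itself a negative circuit, so no balanced spanning subgraph
  contains it. Hence the enhanced states of the balanced complex of \<open>SG\<close> and of \<open>SG - e\<close>
  coincide, and the only extra summand of \<open>d_b\<close> for \<open>SG\<close>, the one adding \<open>e\<close>, is killed
  by \<open>f_b\<close>. The two balanced complexes are therefore equal, not merely isomorphic.\<close>

lemma negative_loop_not_balanced:
  assumes "negative_loop E ends \<sigma> e" and "e \<in> s"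
  shows "\<not> balanced ends \<sigma> s"
proof
  assume bal: "balanced ends \<sigma> s"
  have loop: "ends e = (fst (ends e), fst (ends e))" and neg: "\<sigma> e = -1"
    using assms(1) unfolding negative_loop_def by (metis prod.collapse, simp)
  have "is_circuit ends [e] [fst (ends e)]"
    unfolding is_circuit_def using loop by simp
  moreover have "set [e] \<subseteq> s" and "prod_list (map \<sigma> [e]) = -1"
    using assms(2) neg by simp_all
  ultimately show False
    using bal unfolding balanced_def by blast
qed

lemma bal_states_delete_negative_loop:
  assumes "negative_loop E ends \<sigma> e"
  shows "bal_states V (E - {e}) ends \<sigma> i = bal_states V E ends \<sigma> i"
  unfolding bal_states_def using negative_loop_not_balanced[OF assms] by auto

lemma cochain_group_delete_negative_loop:
  assumes "negative_loop E ends \<sigma> e"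
  shows "cochain_group V (E - {e}) ends \<sigma> i = cochain_group V E ends \<sigma> i"
  unfolding cochain_group_def bal_states_delete_negative_loop[OF assms] ..

lemma edge_step_adds_edge:
  assumes "edge_step ends S e' = Some T"
  shows "e' \<in> fst T"
  using assms unfolding edge_step_def Let_def by (auto split: if_splits)

lemma db_coeff_delete_negative_loop:
  assumes "negative_loop E ends \<sigma> e" and "finite E" and "e \<notin> fst S"
  shows "db_coeff (E - {e}) ends \<sigma> S T = db_coeff E ends \<sigma> S T"
proof -
  have domain: "E - fst S = insert e ((E - {e}) - fst S)"
    using assms(1,3) unfolding negative_loop_def by auto
  have "e \<in> fst T" if "edge_step ends S e = Some T"
    using edge_step_adds_edge[OF that] .
  then have no_term: "(if edge_step ends S e = Some T \<and> balanced ends \<sigma> (fst T)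
      then (-1::int) ^ card {a \<in> fst S. a < e} else 0) = 0"
    using negative_loop_not_balanced[OF assms(1)] by auto
  show ?thesis
    unfolding db_coeff_def domain using assms(2) no_term by (subst sum.insert) auto
qed

lemma bal_diff_delete_negative_loop:
  assumes "negative_loop E ends \<sigma> e" and "finite E"
  shows "bal_diff V (E - {e}) ends \<sigma> i = bal_diff V E ends \<sigma> i"
proof -
  have "e \<notin> fst S" if "S \<in> bal_states V E ends \<sigma> i" for S
    using that negative_loop_not_balanced[OF assms(1)] unfolding bal_states_def by auto
  then show ?thesis
    unfolding bal_diff_def bal_states_delete_negative_loop[OF assms(1)]
    using db_coeff_delete_negative_loop[OF assms] by (intro ext sum.cong) auto
qed

lemma bal_cohom_delete_negative_loop:
  assumes "negative_loop E ends \<sigma> e" and "finite E"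
  shows "bal_cohom V (E - {e}) ends \<sigma> i = bal_cohom V E ends \<sigma> i"
  unfolding bal_cohom_def cochain_group_delete_negative_loop[OF assms(1)]
    bal_diff_delete_negative_loop[OF assms] ..

theorem proposition5p7:
  fixes V :: "'v set" and E :: "'e::linorder set" and ends :: "'e \<Rightarrow> 'v \<times> 'v"
    and \<sigma> :: "'e \<Rightarrow> int" and e :: 'e
  assumes "signed_graph V E ends \<sigma>"
    and "negative_loop E ends \<sigma> e"
  shows "\<forall>i::int. bal_cohom V E ends \<sigma> i \<cong> bal_cohom V (E - {e}) ends \<sigma> i"
proof
  fix i :: int
  have "finite E"
    using assms(1) unfolding signed_graph_def by simp
  then show "bal_cohom V E ends \<sigma> i \<cong> bal_cohom V (E - {e}) ends \<sigma> i"
    using bal_cohom_delete_negative_loop[OF assms(2)] by simp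
qed

end
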